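(* Let $n\ge 2$. For $k\in\mathbb{N}$ let $\bar c_k := c_k^{\mathrm{EH}}/\bigl(\bigl[\tfrac{k+n-1}{n}\bigr]\pi\bigr)$ be the normalized $k$-th Ekeland–Hofer capacity on ellipsoids in $\mathbb{R}^{2n}$. Then, as $k\to\infty$, $\bar c_k$ converges uniformly on ellipsoids to the normalized symplectic capacity $c_\infty$ given by $$c_\infty\bigl(E(a_1,\dots,a_n)\bigr)=\frac{n}{1/a_1+\dots+1/a_n},$$ in the sense that $$\sup\Bigl\{\bigl|\bar c_k\bigl(E(a_1,\dots,a_{n-1},1)\bigr)-c_\infty\bigl(E(a_1,\dots,a_{n-1},1)\bigr)\bigr| \;:\; 0<a_1\le\dots\le a_{n-1}\le 1\Bigr\}\longrightarrow 0 \quad (k\to\infty).$$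
   Context: For $0<a_1\le\dots\le a_n\le\infty$, the ellipsoid is $E(a_1,\dots,a_n)=\{z\in\mathbb{C}^n : \sum_j |z_j|^2/a_j<1\}\subset\mathbb{R}^{2n}$ with the standard symplectic form. The Ekeland–Hofer capacities $c_1^{\mathrm{EH}}\le c_2^{\mathrm{EH}}\le\dots$ take the following values on ellipsoids: writing the numbers $m\,a_i\pi$ ($m\in\mathbb{N}$, $1\le i\le n$) in increasing order, with repetitions, as $d_1\le d_2\le\dots$, one has $c_k^{\mathrm{EH}}(E(a_1,\dots,a_n))=d_k$. $[x]$ denotes the largest integer $\le x$. A capacity is normalized if it takes the value $1$ on the unit ball $B^{2n}(1)=E(1,\dots,1)$. *)

theory Defs
  imports Complex_Main
begin

text \<open>An ellipsoid E(a_1,...,a_n) in R^{2n} (all a_i finite) is represented by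
  its parameter function a, with a_{i+1} stored as a i for i < n.\<close>

definition eh_count :: "nat \<Rightarrow> (nat \<Rightarrow> real) \<Rightarrow> real \<Rightarrow> nat" where
  "eh_count n a t = card {(m, i). 1 \<le> m \<and> i < n \<and> real m * a i * pi \<le> t}"

text \<open>k-th Ekeland--Hofer capacity of E(a_1,...,a_n): the k-th term d_k of the
  nondecreasing enumeration (with repetitions) of the numbers m * a_i * pi.\<close>
definition EH_cap :: "nat \<Rightarrow> nat \<Rightarrow> (nat \<Rightarrow> real) \<Rightarrow> real" where
  "EH_cap n k a = (LEAST t. k \<le> eh_count n a t)"

definition EH_cap_bar :: "nat \<Rightarrow> nat \<Rightarrow> (nat \<Rightarrow> real) \<Rightarrow> real" where
  "EH_cap_bar n k a = EH_cap n k a / (real ((k + n - 1) div n) * pi)"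

definition c_infty :: "nat \<Rightarrow> (nat \<Rightarrow> real) \<Rightarrow> real" where
  "c_infty n a = real n / (\<Sum>i<n. 1 / a i)"

end

theory Submission
  imports Defs
begin

(* Counting the points m a_i pi below t row by row gives
   eh_count n a t = sum_i floor(t / (a_i pi)), which lies within n of (t / pi) S,
   S = sum_i 1/a_i.  Hence the k-th capacity d_k satisfies k <= d_k S / pi <= k + n - 1,
   while q = [(k + n - 1) / n] satisfies k <= n q <= k + n - 1.  So
   |d_k / (q pi) - n / S| = |d_k S / pi - n q| / (q S) <= (n - 1) / (q S), and S >= 1 because
   a_n = 1: the error is O(n^2 / k) uniformly in a. *)

definition eh_pairs :: "nat \<Rightarrow> (nat \<Rightarrow> real) \<Rightarrow> real \<Rightarrow> (nat \<times> nat) set" where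
  "eh_pairs n a t = {(m, i). 1 \<le> m \<and> i < n \<and> real m * a i * pi \<le> t}"

definition eh_value :: "(nat \<Rightarrow> real) \<Rightarrow> nat \<times> nat \<Rightarrow> real" where
  "eh_value a = (\<lambda>(m, i). real m * a i * pi)"

lemma eh_count_eq_card: "eh_count n a t = card (eh_pairs n a t)"
  unfolding eh_count_def eh_pairs_def ..

lemma eh_pairs_mono: "t \<le> u \<Longrightarrow> eh_pairs n a t \<subseteq> eh_pairs n a u"
  unfolding eh_pairs_def by auto

lemma eh_value_le: "x \<in> eh_pairs n a t \<Longrightarrow> eh_value a x \<le> t"
  unfolding eh_pairs_def eh_value_def by auto

lemma multiples_le_eq_atLeastAtMost:
  assumes "0 < c"
  shows "{m :: nat. 1 \<le> m \<and> real m * c \<le> t} = {1..nat \<lfloor>t / c\<rfloor>}"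
proof -
  have "real m * c \<le> t \<longleftrightarrow> m \<le> nat \<lfloor>t / c\<rfloor>" if "1 \<le> m" for m
  proof -
    have "real m * c \<le> t \<longleftrightarrow> real m \<le> t / c"
      using assms by (simp add: pos_le_divide_eq)
    also have "\<dots> \<longleftrightarrow> int m \<le> \<lfloor>t / c\<rfloor>"
      by (simp add: le_floor_iff)
    also have "\<dots> \<longleftrightarrow> m \<le> nat \<lfloor>t / c\<rfloor>"
      using that by linarith
    finally show ?thesis .
  qed
  then show ?thesis
    by (intro set_eqI iffI) auto
qed

lemma eh_pairs_eq_Sigma:
  assumes "\<forall>i<n. 0 < a i"
  shows "eh_pairs n a t = prod.swap ` (SIGMA i:{..<n}. {1..nat \<lfloor>t / (a i * pi)\<rfloor>})"
proof -
  have "{m. 1 \<le> m \<and> real m * (a i * pi) \<le> t} = {1..nat \<lfloor>t / (a i * pi)\<rfloor>}" if "i < n" for i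
    using assms that by (intro multiples_le_eq_atLeastAtMost) simp
  then show ?thesis
    unfolding eh_pairs_def by (auto simp: image_iff mult.assoc set_eq_iff)
qed

lemma finite_eh_pairs: "\<forall>i<n. 0 < a i \<Longrightarrow> finite (eh_pairs n a t)"
  by (simp add: eh_pairs_eq_Sigma)

lemma eh_count_eq_sum_floor:
  assumes "\<forall>i<n. 0 < a i"
  shows "eh_count n a t = (\<Sum>i<n. nat \<lfloor>t / (a i * pi)\<rfloor>)"
  unfolding eh_count_eq_card eh_pairs_eq_Sigma [OF assms]
  by (simp add: card_image)

lemma eh_count_mono:
  assumes "\<forall>i<n. 0 < a i" and "t \<le> u"
  shows "eh_count n a t \<le> eh_count n a u"
  unfolding eh_count_eq_card using assms by (intro card_mono finite_eh_pairs eh_pairs_mono)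

lemma eh_count_le:
  assumes "\<forall>i<n. 0 < a i" and "0 \<le> t"
  shows "real (eh_count n a t) \<le> t / pi * (\<Sum>i<n. 1 / a i)"
proof -
  have "real (eh_count n a t) = (\<Sum>i<n. of_int \<lfloor>t / (a i * pi)\<rfloor>)"
    unfolding eh_count_eq_sum_floor [OF assms(1)] of_nat_sum
    using assms by (intro sum.cong) auto
  also have "\<dots> \<le> (\<Sum>i<n. t / (a i * pi))"
    by (intro sum_mono) simp
  finally show ?thesis
    by (simp add: sum_distrib_left ac_simps)
qed

lemma eh_count_ge:
  assumes "\<forall>i<n. 0 < a i"
  shows "t / pi * (\<Sum>i<n. 1 / a i) - real n \<le> real (eh_count n a t)"
proof -
  have "t / pi * (\<Sum>i<n. 1 / a i) - real n = (\<Sum>i<n. t / (a i * pi) - 1)"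
    by (simp add: sum_subtractf sum_distrib_left ac_simps)
  also have "\<dots> \<le> (\<Sum>i<n. real (nat \<lfloor>t / (a i * pi)\<rfloor>))"
    by (intro sum_mono) linarith
  finally show ?thesis
    using assms by (simp add: eh_count_eq_sum_floor)
qed

lemma eh_count_attained_in_spectrum:
  assumes "\<forall>i<n. 0 < a i" and "eh_pairs n a t \<noteq> {}"
  obtains v where "v \<in> eh_value a ` eh_pairs n a t" and "v \<le> t"
    and "eh_count n a v = eh_count n a t"
proof
  let ?v = "Max (eh_value a ` eh_pairs n a t)"
  have fin: "finite (eh_value a ` eh_pairs n a t)"
    using finite_eh_pairs [OF assms(1)] by blast
  show "?v \<in> eh_value a ` eh_pairs n a t"
    using fin assms(2) by (intro Max_in) auto
  then show "?v \<le> t"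
    by (auto dest: eh_value_le)
  then have "eh_pairs n a ?v \<subseteq> eh_pairs n a t"
    by (rule eh_pairs_mono)
  moreover have "x \<in> eh_pairs n a ?v" if "x \<in> eh_pairs n a t" for x
  proof -
    have "eh_value a x \<le> ?v"
      using fin that by (intro Max_ge) auto
    then show ?thesis
      using that unfolding eh_pairs_def eh_value_def by auto
  qed
  ultimately have "eh_pairs n a ?v = eh_pairs n a t"
    by blast
  then show "eh_count n a ?v = eh_count n a t"
    by (simp add: eh_count_eq_card)
qed

(* The LEAST in EH_cap is attained: it is the minimum of the finitely many spectral values
   below T at which the count reaches k. *)
lemma eh_count_threshold_has_least:
  assumes pos: "\<forall>i<n. 0 < a i" and "1 \<le> k" and "k \<le> eh_count n a T"
  obtains d where "k \<le> eh_count n a d" and "\<And>t. k \<le> eh_count n a t \<Longrightarrow> d \<le> t"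
proof -
  have reduce: "\<exists>v \<in> eh_value a ` eh_pairs n a t. v \<le> t \<and> k \<le> eh_count n a v"
    if "k \<le> eh_count n a t" for t
  proof -
    have "eh_pairs n a t \<noteq> {}"
      using that \<open>1 \<le> k\<close> by (auto simp: eh_count_eq_card)
    then obtain v where "v \<in> eh_value a ` eh_pairs n a t" "v \<le> t" "eh_count n a v = eh_count n a t"
      using eh_count_attained_in_spectrum [OF pos] by blast
    with that show ?thesis
      by auto
  qed
  define W where "W = {v \<in> eh_value a ` eh_pairs n a T. k \<le> eh_count n a v}"
  have W_le: "v \<le> T" if "v \<in> W" for v
    using that eh_value_le unfolding W_def by auto
  have "finite W"
    unfolding W_def using finite_eh_pairs [OF pos] by simp
  moreover have "W \<noteq> {}"
    unfolding W_def using reduce [OF assms(3)] by blast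
  ultimately have "Min W \<in> W"
    by (rule Min_in)
  show ?thesis
  proof (rule that)
    show "k \<le> eh_count n a (Min W)"
      using \<open>Min W \<in> W\<close> unfolding W_def by blast
  next
    fix t
    assume count_t: "k \<le> eh_count n a t"
    show "Min W \<le> t"
    proof (cases "t \<le> T")
      case True
      obtain v where v: "v \<in> eh_value a ` eh_pairs n a t" "v \<le> t" "k \<le> eh_count n a v"
        using reduce [OF count_t] by blast
      then have "v \<in> W"
        unfolding W_def using eh_pairs_mono [OF True] by blast
      then show ?thesis
        using \<open>finite W\<close> v(2) by (meson Min_le order_trans)
    next
      case False
      then show ?thesis
        using W_le [OF \<open>Min W \<in> W\<close>] by linarith
    qed
  qed
qed

lemma sum_inverse_pos:
  fixes a :: "nat \<Rightarrow> real"
  assumes "\<forall>i<n. 0 < a i" and "1 \<le> n"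
  shows "0 < (\<Sum>i<n. 1 / a i)"
proof (rule sum_pos)
  show "{..<n} \<noteq> {}"
    using assms(2) by (simp add: lessThan_empty_iff)
qed (use assms(1) in auto)

lemma sum_inverse_ge_one:
  fixes a :: "nat \<Rightarrow> real"
  assumes "\<forall>i<n. 0 < a i" and "j < n" and "a j \<le> 1"
  shows "1 \<le> (\<Sum>i<n. 1 / a i)"
proof -
  have "1 \<le> 1 / a j"
    using assms by simp
  also have "\<dots> \<le> (\<Sum>i<n. 1 / a i)"
    using assms by (intro member_le_sum) (simp_all add: less_imp_le)
  finally show ?thesis .
qed

lemma EH_cap_le_iff:
  assumes pos: "\<forall>i<n. 0 < a i" and "1 \<le> n" and "1 \<le> k"
  shows "EH_cap n k a \<le> t \<longleftrightarrow> k \<le> eh_count n a t"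
proof -
  define T where "T = (real k + real n) * pi / (\<Sum>i<n. 1 / a i)"
  have "0 < (\<Sum>i<n. 1 / a i)"
    using pos \<open>1 \<le> n\<close> by (rule sum_inverse_pos)
  then have "T / pi * (\<Sum>i<n. 1 / a i) - real n = real k"
    unfolding T_def by simp
  then have "k \<le> eh_count n a T"
    using eh_count_ge [OF pos, of T] by linarith
  then obtain d where d: "k \<le> eh_count n a d" "\<And>t. k \<le> eh_count n a t \<Longrightarrow> d \<le> t"
    using eh_count_threshold_has_least [OF pos \<open>1 \<le> k\<close>] by blast
  have "EH_cap n k a = d"
    unfolding EH_cap_def using d by (intro Least_equality)
  show ?thesis
  proof
    assume "EH_cap n k a \<le> t"
    then show "k \<le> eh_count n a t"
      using d(1) eh_count_mono [OF pos, of d t] \<open>EH_cap n k a = d\<close> by simp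
  next
    assume "k \<le> eh_count n a t"
    then show "EH_cap n k a \<le> t"
      using d(2) \<open>EH_cap n k a = d\<close> by simp
  qed
qed

lemma EH_cap_bounds:
  assumes pos: "\<forall>i<n. 0 < a i" and "1 \<le> n" and "1 \<le> k"
  defines "S \<equiv> \<Sum>i<n. 1 / a i"
  shows "real k \<le> EH_cap n k a / pi * S" and "EH_cap n k a / pi * S \<le> real k + real n - 1"
proof -
  let ?d = "EH_cap n k a"
  have S_pos: "0 < S"
    unfolding S_def using pos \<open>1 \<le> n\<close> by (rule sum_inverse_pos)
  have count_d: "k \<le> eh_count n a ?d"
    using EH_cap_le_iff [OF assms(1-3)] by blast
  have "0 \<le> ?d"
  proof (rule ccontr)
    assume "\<not> 0 \<le> ?d"
    then have "eh_count n a ?d \<le> eh_count n a 0"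
      using eh_count_mono [OF pos] by simp
    also have "\<dots> = 0"
      using pos by (simp add: eh_count_eq_sum_floor)
    finally show False
      using count_d \<open>1 \<le> k\<close> by simp
  qed
  have "real k \<le> real (eh_count n a ?d)"
    using count_d by simp
  also have "\<dots> \<le> ?d / pi * S"
    unfolding S_def using eh_count_le [OF pos \<open>0 \<le> ?d\<close>] .
  finally show "real k \<le> ?d / pi * S" .
  have "?d \<le> t" if "(real k + real n - 1) * pi / S < t" for t
  proof -
    have "real k + real n - 1 < t / pi * S"
      using that S_pos by (simp add: field_simps)
    then have "k \<le> eh_count n a t"
      using eh_count_ge [OF pos, of t] unfolding S_def by linarith
    then show ?thesis
      using EH_cap_le_iff [OF assms(1-3)] by blast
  qed
  then have "?d \<le> (real k + real n - 1) * pi / S"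
    by (rule dense_ge)
  then show "?d / pi * S \<le> real k + real n - 1"
    using S_pos by (simp add: field_simps)
qed

lemma div_ceiling_bounds:
  fixes k n :: nat
  assumes "1 \<le> n"
  shows "k \<le> n * ((k + n - 1) div n)" and "n * ((k + n - 1) div n) \<le> k + n - 1"
proof -
  have "n * ((k + n - 1) div n) + (k + n - 1) mod n = k + n - 1"
    by (rule mult_div_mod_eq)
  moreover have "(k + n - 1) mod n < n"
    using assms by simp
  ultimately show "k \<le> n * ((k + n - 1) div n)" and "n * ((k + n - 1) div n) \<le> k + n - 1"
    by linarith+
qed

lemma abs_div_diff_le:
  fixes x S q k n :: real
  assumes "1 \<le> S" and "1 \<le> n" and "0 < k"
    and "k \<le> x * S" and "x * S \<le> k + n - 1"
    and "k \<le> n * q" and "n * q \<le> k + n - 1"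
  shows "\<bar>x / q - n / S\<bar> \<le> n * n / k"
proof -
  have q_pos: "0 < q"
    using assms(1-3,6) by (smt (verit) mult_nonneg_nonpos)
  have "\<bar>x / q - n / S\<bar> = \<bar>x * S - n * q\<bar> / (q * S)"
    using assms(1) q_pos by (simp add: field_simps abs_divide)
  also have "\<dots> \<le> (n - 1) / (q * S)"
    using assms q_pos by (intro divide_right_mono) auto
  also have "\<dots> \<le> (n - 1) / q"
    using assms(1,2) q_pos by (intro divide_left_mono) (auto simp: mult_le_cancel_left1)
  also have "\<dots> \<le> n * n / k"
  proof -
    have "(n - 1) * k \<le> (n - 1) * (n * q)"
      using assms(2,6) by (intro mult_left_mono) auto
    also have "\<dots> \<le> n * n * q"
      using assms(2) q_pos by (simp add: algebra_simps)
    finally show ?thesis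
      using q_pos assms(3) by (simp add: divide_simps)
  qed
  finally show ?thesis .
qed

lemma EH_cap_bar_approx:
  assumes pos: "\<forall>i<n. 0 < a i" and "1 \<le> n" and "1 \<le> k" and S_ge: "1 \<le> (\<Sum>i<n. 1 / a i)"
  shows "\<bar>EH_cap_bar n k a - c_infty n a\<bar> \<le> real n * real n / real k"
proof -
  define q where "q = (k + n - 1) div n"
  have q: "k \<le> n * q" "n * q \<le> k + n - 1"
    unfolding q_def using div_ceiling_bounds [OF \<open>1 \<le> n\<close>] by auto
  have "real (k + n - 1) = real k + real n - 1"
    using \<open>1 \<le> n\<close> by (simp add: of_nat_diff)
  then have "real n * real q \<le> real k + real n - 1"
    using of_nat_mono [OF q(2), where 'a = real] by simp
  moreover have "real k \<le> real n * real q"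
    using of_nat_mono [OF q(1), where 'a = real] by simp
  moreover have "1 \<le> real n" and "0 < real k"
    using \<open>1 \<le> n\<close> \<open>1 \<le> k\<close> by simp_all
  ultimately have "\<bar>EH_cap n k a / pi / real q - real n / (\<Sum>i<n. 1 / a i)\<bar> \<le> real n * real n / real k"
    using abs_div_diff_le [OF S_ge _ _ EH_cap_bounds [OF pos \<open>1 \<le> n\<close> \<open>1 \<le> k\<close>]] by blast
  then show ?thesis
    unfolding EH_cap_bar_def c_infty_def q_def by (simp add: ac_simps)
qed

lemma tendsto_SUP_zero_if_uniformly_bounded:
  fixes f :: "'b \<Rightarrow> 'a \<Rightarrow> real"
  assumes "A \<noteq> {}" and "\<forall>\<^sub>F k in F. \<forall>x\<in>A. 0 \<le> f k x \<and> f k x \<le> g k" and "(g \<longlongrightarrow> 0) F"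
  shows "((\<lambda>k. SUP x\<in>A. f k x) \<longlongrightarrow> 0) F"
proof (rule tendsto_sandwich [OF _ _ tendsto_const assms(3)])
  show "\<forall>\<^sub>F k in F. 0 \<le> (SUP x\<in>A. f k x)"
    using assms(2)
  proof eventually_elim
    case (elim k)
    then have "bdd_above (f k ` A)"
      by (intro bdd_aboveI2) blast
    with elim \<open>A \<noteq> {}\<close> show ?case
      by (meson all_not_in_conv cSUP_upper order_trans)
  qed
  show "\<forall>\<^sub>F k in F. (SUP x\<in>A. f k x) \<le> g k"
    using assms(2) by eventually_elim (use \<open>A \<noteq> {}\<close> in \<open>auto intro: cSUP_least\<close>)
qed

theorem mainTheorem1:
  fixes n :: nat
  assumes "n \<ge> 2"
  shows "(\<lambda>k. SUP a \<in> {a :: nat \<Rightarrow> real. (\<forall>i<n. 0 < a i)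
                 \<and> (\<forall>i j. i \<le> j \<and> j < n \<longrightarrow> a i \<le> a j) \<and> a (n - 1) = 1}.
            \<bar>EH_cap_bar n k a - c_infty n a\<bar>) \<longlonglongrightarrow> 0"
proof (intro tendsto_SUP_zero_if_uniformly_bounded [where g = "\<lambda>k. real n * real n / real k"]
    eventually_sequentiallyI [of 1] ballI conjI abs_ge_zero lim_const_over_n, goal_cases)
  case 1
  show ?case
    by (auto intro!: exI [of _ "\<lambda>_. 1"])
next
  case (2 k a)
  then have "\<forall>i<n. 0 < a i" and "a (n - 1) = 1"
    by simp_all
  with 2 assms show ?case
    by (intro EH_cap_bar_approx sum_inverse_ge_one [of n a "n - 1"]) simp_all
qed

end
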